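(* Let $f:\{0,1\}^n\to\{0,1\}$ be a boolean function that is not invariant under any nonzero translation, i.e.\ $S_f=\{0^n\}$. Then $Q_E^{na}(f)=n$.
   Context: Addition of bit strings is in $\mathbb Z_2^n$ (bitwise mod 2). $S_f:=\{z\in\{0,1\}^n: f(x)=f(x+z)\ \text{for all } x\}$. Nonadaptive exact quantum query model: let $\mathcal H_{\rm in}$ have orthonormal basis $|0\rangle,\dots,|n\rangle$ and let the oracle $O_x$ act by $|i\rangle\mapsto(-1)^{x_i}|i\rangle$ with convention $x_0=0$. A nonadaptive quantum algorithm making $k$ queries consists of an input-independent state $|\psi\rangle\in\mathcal H_{\rm in}^{\otimes k}\otimes\mathcal H_{\rm work}$ (with $\mathcal H_{\rm work}$ a finite-dimensional workspace), to which $O_x^{\otimes k}\otimes I$ is applied, followed by an input-independent two-outcome measurement with outcomes labelled $0,1$. It computes $f$ exactly if for every $x$ the outcome is $f(x)$ with probability $1$. $Q_E^{na}(f)$ is the minimum such $k$. *)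

theory Defs
  imports Complex_Main
begin

text \<open>Bit strings of length n are represented as bool lists of length n
  (True = 1). Position i (1 \<le> i \<le> n) of the paper is list index i-1.\<close>

definition bxor :: "bool list \<Rightarrow> bool list \<Rightarrow> bool list" where
  "bxor x z = map2 (\<lambda>a b. a \<noteq> b) x z"

definition bitstrings :: "nat \<Rightarrow> bool list set" where
  "bitstrings n = {x. length x = n}"

definition S_f :: "nat \<Rightarrow> (bool list \<Rightarrow> bool) \<Rightarrow> bool list set" where
  "S_f n f = {z \<in> bitstrings n. \<forall>x \<in> bitstrings n. f x = f (bxor x z)}"

text \<open>Query register basis |0>,...,|n>; the bit x_i with convention x_0 = 0.\<close>
definition qbit :: "bool list \<Rightarrow> nat \<Rightarrow> bool" where
  "qbit x i = (if i = 0 then False else x ! (i - 1))"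

text \<open>Basis of H_in^{\<otimes>k} \<otimes> H_work, where H_work has dimension d:
  pairs (query indices i_1..i_k, workspace index w).\<close>
definition basis_idx :: "nat \<Rightarrow> nat \<Rightarrow> nat \<Rightarrow> (nat list \<times> nat) set" where
  "basis_idx n k d = {(is, w). length is = k \<and> set is \<subseteq> {0..n} \<and> w < d}"

text \<open>Action of O_x^{\<otimes>k} \<otimes> I on a state.\<close>
definition apply_oracle :: "bool list \<Rightarrow> (nat list \<times> nat \<Rightarrow> complex) \<Rightarrow> (nat list \<times> nat \<Rightarrow> complex)" where
  "apply_oracle x \<psi> = (\<lambda>(is, w). (-1) ^ length (filter (qbit x) is) * \<psi> (is, w))"

definition sqnorm :: "'i set \<Rightarrow> ('i \<Rightarrow> complex) \<Rightarrow> real" where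
  "sqnorm I v = (\<Sum>a\<in>I. (cmod (v a))\<^sup>2)"

definition qform :: "'i set \<Rightarrow> ('i \<Rightarrow> 'i \<Rightarrow> complex) \<Rightarrow> ('i \<Rightarrow> complex) \<Rightarrow> complex" where
  "qform I E v = (\<Sum>a\<in>I. \<Sum>b\<in>I. cnj (v a) * E a b * v b)"

text \<open>A two-outcome measurement (POVM) {E, I - E} on the space with basis I:
  E Hermitian with 0 \<le> E \<le> I (operator order).\<close>
definition two_outcome_povm :: "'i set \<Rightarrow> ('i \<Rightarrow> 'i \<Rightarrow> complex) \<Rightarrow> bool" where
  "two_outcome_povm I E \<longleftrightarrow>
     (\<forall>a\<in>I. \<forall>b\<in>I. E b a = cnj (E a b)) \<and>
     (\<forall>v. 0 \<le> Re (qform I E v) \<and> Re (qform I E v) \<le> sqnorm I v)"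

text \<open>E is the effect for outcome 0; its probability on state v is <v|E|v>.\<close>
definition prob_outcome0 :: "'i set \<Rightarrow> ('i \<Rightarrow> 'i \<Rightarrow> complex) \<Rightarrow> ('i \<Rightarrow> complex) \<Rightarrow> real" where
  "prob_outcome0 I E v = Re (qform I E v)"

definition computes_exactly_na :: "nat \<Rightarrow> (bool list \<Rightarrow> bool) \<Rightarrow> nat \<Rightarrow> bool" where
  "computes_exactly_na n f k \<longleftrightarrow>
     (\<exists>d::nat. \<exists>\<psi> :: nat list \<times> nat \<Rightarrow> complex. \<exists>E.
        d \<ge> 1 \<and> sqnorm (basis_idx n k d) \<psi> = 1 \<and>
        two_outcome_povm (basis_idx n k d) E \<and>
        (\<forall>x \<in> bitstrings n.
           prob_outcome0 (basis_idx n k d) E (apply_oracle x \<psi>) = (if f x then 0 else 1)))"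

definition QE_na :: "nat \<Rightarrow> (bool list \<Rightarrow> bool) \<Rightarrow> nat" where
  "QE_na n f = (LEAST k. computes_exactly_na n f k)"

end

theory Submission imports Defs begin

text \<open>
  For a query word L (a list of query indices in {0..n}) write
  chi x L = (-1)^(number of i in L with x_i = 1); the oracle O_x^{\<otimes>k} \<otimes> I
  multiplies the basis vector (L, w) by chi x L.  Two facts about these
  characters drive everything: chi is multiplicative in L and in x
  (chi x L * chi y L = chi (x + y) L), and the sum of chi z L over all z
  vanishes as soon as some position j in {1..n} occurs an odd number of
  times in L.

  An exact algorithm must map
  inputs with different values of f to orthogonal states.  Hence the
  function G z = sum over basis vectors a of chi z a * |psi a|^2 vanishes
  for every z outside S_f, while G 0 = 1.  Since S_f = {0}, the Fourier
  coefficient of G at the full word [1..n] equals 1; but every word of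
  length k < n misses some position, so this coefficient is 0.

  Upper bound (n queries suffice, for every f).  Querying the uniform
  superposition of the words q_z = (z_1*1, ..., z_n*n) yields the Hadamard
  states O_x psi, which are orthonormal; the projector onto the span of
  those with f x = 0 is the required measurement.
\<close>

section \<open>Characters of query words\<close>

definition chi :: "bool list \<Rightarrow> nat list \<Rightarrow> complex" where
  "chi x L = (-1) ^ length (filter (qbit x) L)"

lemma chi_Nil [simp]: "chi x [] = 1"
  by (simp add: chi_def)

lemma chi_Cons: "chi x (i # L) = (if qbit x i then -1 else 1) * chi x L"
  by (simp add: chi_def)

lemma chi_append: "chi x (L @ M) = chi x L * chi x M"
  by (simp add: chi_def power_add)

lemma chi_square [simp]: "chi x L * chi x L = 1"
  by (simp add: chi_def power_add[symmetric] flip: power_mult_distrib)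

lemma cnj_chi [simp]: "cnj (chi x L) = chi x L"
  by (simp add: chi_def)

lemma cmod_chi [simp]: "cmod (chi x L) = 1"
  by (simp add: chi_def norm_power)

lemma apply_oracle_chi: "apply_oracle x \<psi> a = chi x (fst a) * \<psi> a"
  by (cases a) (simp add: apply_oracle_def chi_def)

lemma length_bxor [simp]: "length (bxor x z) = min (length x) (length z)"
  by (simp add: bxor_def)

lemma chi_bxor:
  assumes "length x = n" "length z = n" "set L \<subseteq> {0..n}"
  shows "chi x L * chi (bxor x z) L = chi z L"
  using assms(3)
proof (induction L)
  case Nil
  then show ?case by simp
next
  case (Cons i L)
  have "qbit (bxor x z) i = (qbit x i \<noteq> qbit z i)"
    using Cons.prems assms(1,2) by (auto simp: qbit_def bxor_def)
  moreover have "chi x (i # L) * chi (bxor x z) (i # L) =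
      ((if qbit x i then -1 else 1) * (if qbit (bxor x z) i then -1 else 1))
      * (chi x L * chi (bxor x z) L)"
    by (simp add: chi_Cons)
  ultimately show ?case
    using Cons by (auto simp: chi_Cons)
qed

lemma chi_zero: "set L \<subseteq> {0..n} \<Longrightarrow> chi (replicate n False) L = 1"
  by (induction L) (auto simp: chi_Cons qbit_def)

lemma finite_bitstrings [simp]: "finite (bitstrings n)"
  unfolding bitstrings_def using finite_lists_length_eq[of "UNIV::bool set" n] by simp

lemma card_bitstrings: "card (bitstrings n) = 2 ^ n"
  unfolding bitstrings_def using card_lists_length_eq[of "UNIV::bool set" n] by simp

definition flip_bit :: "nat \<Rightarrow> bool list \<Rightarrow> bool list" where
  "flip_bit j z = z[j - 1 := \<not> z ! (j - 1)]"

lemma chi_flip_bit: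
  assumes "1 \<le> j" "j \<le> length z"
  shows "chi (flip_bit j z) L = (-1) ^ count_list L j * chi z L"
proof (induction L)
  case (Cons i L)
  have "qbit (flip_bit j z) i = (if i = j then \<not> qbit z i else qbit z i)"
    using assms by (auto simp: qbit_def flip_bit_def nth_list_update)
  then show ?case using Cons by (auto simp: chi_Cons)
qed simp

text \<open>Orthogonality of characters: the sum over all inputs vanishes as soon as
  some position occurs an odd number of times (flip_bit j is an involution
  of the cube that negates every summand).\<close>
lemma sum_chi_odd_count:
  assumes "1 \<le> j" "j \<le> n" "odd (count_list L j)"
  shows "(\<Sum>z\<in>bitstrings n. chi z L) = 0"
proof -
  have "(\<Sum>z\<in>bitstrings n. chi z L) = (\<Sum>z\<in>bitstrings n. chi (flip_bit j z) L)"
    by (rule sum.reindex_bij_witness[where i="flip_bit j" and j="flip_bit j"])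
       (use assms in \<open>auto simp: flip_bit_def bitstrings_def\<close>)
  also have "\<dots> = (\<Sum>z\<in>bitstrings n. - chi z L)"
    by (rule sum.cong) (use assms in \<open>auto simp: chi_flip_bit bitstrings_def\<close>)
  finally show ?thesis by (simp add: sum_negf)
qed

section \<open>Two-outcome measurements that never err\<close>

definition cinner :: "'i set \<Rightarrow> ('i \<Rightarrow> complex) \<Rightarrow> ('i \<Rightarrow> complex) \<Rightarrow> complex" where
  "cinner I u w = (\<Sum>a\<in>I. cnj (u a) * w a)"

definition sform :: "'i set \<Rightarrow> ('i \<Rightarrow> 'i \<Rightarrow> complex) \<Rightarrow> ('i \<Rightarrow> complex) \<Rightarrow> ('i \<Rightarrow> complex) \<Rightarrow> complex" where
  "sform I F u w = (\<Sum>a\<in>I. \<Sum>b\<in>I. cnj (u a) * F a b * w b)"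

lemma qform_sform: "qform I F v = sform I F v v"
  by (simp add: qform_def sform_def)

lemma cinner_self: "cinner I v v = of_real (sqnorm I v)"
  unfolding cinner_def sqnorm_def of_real_sum
  by (rule sum.cong[OF refl]) (simp only: complex_norm_square mult.commute)

lemma cinner_swap: "cinner I w u = cnj (cinner I u w)"
  by (simp add: cinner_def mult.commute)

lemma sform_hermitian:
  assumes "\<forall>a\<in>I. \<forall>b\<in>I. F b a = cnj (F a b)"
  shows "sform I F w u = cnj (sform I F u w)"
proof -
  have "cnj (sform I F u w) = (\<Sum>a\<in>I. \<Sum>b\<in>I. u a * cnj (F a b) * cnj (w b))"
    by (simp add: sform_def)
  also have "\<dots> = (\<Sum>a\<in>I. \<Sum>b\<in>I. cnj (w b) * F b a * u a)"
  proof (intro sum.cong refl)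
    fix a b assume "a \<in> I" "b \<in> I"
    then have "F b a = cnj (F a b)" using assms by blast
    then show "u a * cnj (F a b) * cnj (w b) = cnj (w b) * F b a * u a"
      by (simp only: ac_simps)
  qed
  also have "\<dots> = sform I F w u"
    unfolding sform_def by (rule sum.swap)
  finally show ?thesis by simp
qed

lemma qform_add_scaled:
  "qform I F (\<lambda>a. u a + t * w a) =
     qform I F u + t * sform I F u w + cnj t * sform I F w u + cnj t * t * qform I F w"
proof -
  have "\<And>a b. cnj (u a + t * w a) * F a b * (u b + t * w b) =
      cnj (u a) * F a b * u b + t * (cnj (u a) * F a b * w b)
      + cnj t * (cnj (w a) * F a b * u b) + cnj t * t * (cnj (w a) * F a b * w b)"
    by (simp add: algebra_simps)
  then show ?thesis
    unfolding qform_sform sform_def by (simp only: sum.distrib sum_distrib_left)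
qed

text \<open>For a positive semidefinite Hermitian F, a vector w with w* F w = 0 lies
  in the kernel of F: otherwise u + t w has negative F-norm for suitable t.\<close>
lemma psd_null_vector_orthogonal:
  assumes herm: "\<forall>a\<in>I. \<forall>b\<in>I. F b a = cnj (F a b)"
    and psd: "\<And>v. 0 \<le> Re (qform I F v)" and null: "Re (qform I F w) = 0"
  shows "sform I F u w = 0"
proof (rule ccontr)
  let ?B = "sform I F u w"
  assume nz: "?B \<noteq> 0"
  have lin: "0 \<le> Re (qform I F u) + 2 * Re (t * ?B)" for t
  proof -
    have "cnj t * t = of_real ((cmod t)\<^sup>2)"
      by (simp only: complex_norm_square mult.commute)
    then have "Re (qform I F (\<lambda>a. u a + t * w a)) = Re (qform I F u) + Re (t * ?B + cnj (t * ?B))"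
      using null by (simp add: qform_add_scaled sform_hermitian[OF herm, of w u])
    then show ?thesis using psd[of "\<lambda>a. u a + t * w a"] by simp
  qed
  define s where "s = (Re (qform I F u) + 1) / (2 * (cmod ?B)\<^sup>2)"
  have "(cmod ?B)\<^sup>2 = Re ?B * Re ?B + Im ?B * Im ?B"
    using cmod_power2[of ?B] by (simp only: power2_eq_square)
  then have "Re ((- of_real s * cnj ?B) * ?B) = - s * (cmod ?B)\<^sup>2"
    by (simp add: algebra_simps)
  then have "0 \<le> Re (qform I F u) - 2 * s * (cmod ?B)\<^sup>2"
    using lin[of "- of_real s * cnj ?B"] by simp
  moreover have "2 * s * (cmod ?B)\<^sup>2 = Re (qform I F u) + 1"
    unfolding s_def using nz by (simp add: field_simps)
  ultimately show False by simp
qed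

definition complement :: "('i \<Rightarrow> 'i \<Rightarrow> complex) \<Rightarrow> 'i \<Rightarrow> 'i \<Rightarrow> complex" where
  "complement E a b = (if a = b then 1 else 0) - E a b"

lemma sform_complement:
  assumes "finite I"
  shows "sform I (complement E) u w = cinner I u w - sform I E u w"
proof -
  have "sform I (complement E) u w =
      (\<Sum>a\<in>I. \<Sum>b\<in>I. (if a = b then cnj (u a) * w b else 0) - cnj (u a) * E a b * w b)"
    unfolding sform_def complement_def
    by (intro sum.cong refl) (simp add: left_diff_distrib right_diff_distrib)
  also have "\<dots> = (\<Sum>a\<in>I. \<Sum>b\<in>I. if a = b then cnj (u a) * w b else 0) - sform I E u w"
    unfolding sform_def by (simp only: sum_subtractf)
  also have "(\<Sum>a\<in>I. \<Sum>b\<in>I. if a = b then cnj (u a) * w b else 0) = cinner I u w"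
    unfolding cinner_def by (rule sum.cong[OF refl]) (simp add: sum.delta'[OF assms])
  finally show ?thesis .
qed

text \<open>A measurement that yields outcome 0 with certainty on the unit vector u and
  with probability 0 on w forces u and w to be orthogonal: apply the previous
  lemma to E (null vector w) and to I - E (null vector u).\<close>
lemma exact_outcomes_orthogonal:
  assumes fin: "finite I" and povm: "two_outcome_povm I E" and unit: "sqnorm I u = 1"
    and pu: "prob_outcome0 I E u = 1" and pw: "prob_outcome0 I E w = 0"
  shows "cinner I w u = 0"
proof -
  have herm: "\<forall>a\<in>I. \<forall>b\<in>I. E b a = cnj (E a b)"
    and bounds: "\<And>v. 0 \<le> Re (qform I E v) \<and> Re (qform I E v) \<le> sqnorm I v"
    using povm unfolding two_outcome_povm_def by blast+
  have herm': "\<forall>a\<in>I. \<forall>b\<in>I. complement E b a = cnj (complement E a b)"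
  proof (intro ballI)
    fix a b assume "a \<in> I" "b \<in> I"
    then have "E b a = cnj (E a b)" using herm by blast
    then show "complement E b a = cnj (complement E a b)"
      unfolding complement_def by simp
  qed
  have Re_complement: "Re (qform I (complement E) v) = sqnorm I v - Re (qform I E v)" for v
    unfolding qform_sform sform_complement[OF fin] cinner_self by simp
  have E_kills_w: "sform I E u w = 0"
    by (rule psd_null_vector_orthogonal[OF herm]) (use bounds pw in \<open>auto simp: prob_outcome0_def\<close>)
  have complement_kills_u: "sform I (complement E) w u = 0"
    by (rule psd_null_vector_orthogonal[OF herm'])
       (use bounds pu unit Re_complement in \<open>auto simp: prob_outcome0_def\<close>)
  have "cinner I w u = sform I E w u"
    using complement_kills_u unfolding sform_complement[OF fin] by simp
  also have "\<dots> = cnj (sform I E u w)"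
    by (rule sform_hermitian[OF herm])
  finally show ?thesis
    using E_kills_w by simp
qed

section \<open>Lower bound: fewer than n queries do not suffice\<close>

text \<open>The Fourier transform of the distribution of query words in psi:
  G z = sum over basis vectors a of chi z (word of a) * |psi a|^2.\<close>
definition query_spectrum :: "(nat list \<times> nat) set \<Rightarrow> (nat list \<times> nat \<Rightarrow> complex) \<Rightarrow> bool list \<Rightarrow> complex" where
  "query_spectrum I \<psi> z = (\<Sum>a\<in>I. chi z (fst a) * (cnj (\<psi> a) * \<psi> a))"

lemma finite_basis_idx [simp]: "finite (basis_idx n k d)"
proof -
  have "basis_idx n k d = {L. set L \<subseteq> {0..n} \<and> length L = k} \<times> {..<d}"
    unfolding basis_idx_def by auto
  then show ?thesis by (simp add: finite_lists_length_eq)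
qed

lemma basis_idx_word:
  "a \<in> basis_idx n k d \<Longrightarrow> set (fst a) \<subseteq> {0..n} \<and> length (fst a) = k"
  unfolding basis_idx_def by auto

lemma sqnorm_apply_oracle: "sqnorm I (apply_oracle x \<psi>) = sqnorm I \<psi>"
  unfolding sqnorm_def by (simp add: apply_oracle_chi norm_mult)

lemma overlap_oracle_states:
  assumes "x \<in> bitstrings n" "z \<in> bitstrings n"
  shows "cinner (basis_idx n k d) (apply_oracle (bxor x z) \<psi>) (apply_oracle x \<psi>) =
    query_spectrum (basis_idx n k d) \<psi> z"
  unfolding cinner_def query_spectrum_def
proof (intro sum.cong refl)
  fix a assume "a \<in> basis_idx n k d"
  then have "chi x (fst a) * chi (bxor x z) (fst a) = chi z (fst a)"
    using chi_bxor[of x n z "fst a"] assms basis_idx_word by (simp add: bitstrings_def)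
  then show "cnj (apply_oracle (bxor x z) \<psi> a) * apply_oracle x \<psi> a =
      chi z (fst a) * (cnj (\<psi> a) * \<psi> a)"
    by (simp add: apply_oracle_chi algebra_simps)
qed

text \<open>An exact algorithm makes the oracle states of inputs with different
  function values orthogonal, so the spectrum vanishes off S_f.\<close>
lemma query_spectrum_vanishes:
  assumes unit: "sqnorm (basis_idx n k d) \<psi> = 1"
    and povm: "two_outcome_povm (basis_idx n k d) E"
    and exact: "\<forall>x \<in> bitstrings n.
      prob_outcome0 (basis_idx n k d) E (apply_oracle x \<psi>) = (if f x then 0 else 1)"
    and z: "z \<in> bitstrings n" "z \<notin> S_f n f"
  shows "query_spectrum (basis_idx n k d) \<psi> z = 0"
proof -
  let ?I = "basis_idx n k d" and ?\<phi> = "\<lambda>x. apply_oracle x \<psi>"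
  obtain x where x: "x \<in> bitstrings n" and differ: "f x \<noteq> f (bxor x z)"
    using z unfolding S_f_def by auto
  have y: "bxor x z \<in> bitstrings n"
    using x z by (simp add: bitstrings_def)
  have orth: "cinner ?I (?\<phi> v) (?\<phi> u) = 0"
    if "u \<in> bitstrings n" "v \<in> bitstrings n" "\<not> f u" "f v" for u v
    by (rule exact_outcomes_orthogonal[OF finite_basis_idx povm])
       (use that unit exact in \<open>simp_all add: sqnorm_apply_oracle\<close>)
  have "cinner ?I (?\<phi> (bxor x z)) (?\<phi> x) = 0"
  proof (cases "f x")
    case True
    then have "cinner ?I (?\<phi> x) (?\<phi> (bxor x z)) = 0"
      using orth[OF y x] differ by simp
    then show ?thesis by (subst cinner_swap) simp
  next
    case False
    then show ?thesis using orth[OF x y] differ by simp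
  qed
  then show ?thesis
    using overlap_oracle_states[OF x z(1)] by simp
qed

lemma query_spectrum_zero:
  "query_spectrum (basis_idx n k d) \<psi> (replicate n False) = of_real (sqnorm (basis_idx n k d) \<psi>)"
  unfolding query_spectrum_def cinner_self[symmetric] cinner_def
  by (intro sum.cong refl) (simp add: chi_zero basis_idx_word)

lemma count_list_upt:
  assumes "1 \<le> j" "j \<le> n"
  shows "count_list [1..<Suc n] j = 1"
proof -
  have "count_list [1..<Suc n] j = card ({x. j = x} \<inter> set [1..<Suc n])"
    by (simp add: count_list_eq_length_filter distinct_length_filter)
  also have "{x. j = x} \<inter> set [1..<Suc n] = {j}"
    using assms by auto
  finally show ?thesis by simp
qed

text \<open>The Fourier coefficient of the spectrum at the full word [1..n] vanishes
  when every query word has length k < n: each word misses some position j,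
  which then occurs exactly once in [1..n] @ word.\<close>
lemma top_coefficient_vanishes:
  assumes "k < n"
  shows "(\<Sum>z\<in>bitstrings n. chi z [1..<Suc n] * query_spectrum (basis_idx n k d) \<psi> z) = 0"
proof -
  let ?I = "basis_idx n k d"
  have "(\<Sum>z\<in>bitstrings n. chi z [1..<Suc n] * query_spectrum ?I \<psi> z) =
      (\<Sum>a\<in>?I. (cnj (\<psi> a) * \<psi> a) * (\<Sum>z\<in>bitstrings n. chi z ([1..<Suc n] @ fst a)))"
    unfolding query_spectrum_def sum_distrib_left chi_append
    by (subst sum.swap) (simp add: algebra_simps)
  also have "\<dots> = 0"
  proof (intro sum.neutral ballI)
    fix a assume a: "a \<in> ?I"
    have "\<not> {1..n} \<subseteq> set (fst a)"
    proof
      assume "{1..n} \<subseteq> set (fst a)"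
      then have "card {1..n} \<le> card (set (fst a))"
        by (intro card_mono) auto
      also have "\<dots> \<le> length (fst a)"
        by (rule card_length)
      finally show False using basis_idx_word[OF a] assms by simp
    qed
    then obtain j where j: "1 \<le> j" "j \<le> n" "j \<notin> set (fst a)"
      by (meson atLeastAtMost_iff subsetI)
    then have "odd (count_list ([1..<Suc n] @ fst a) j)"
      unfolding count_list_append count_list_upt[OF j(1,2)] by (simp add: count_list_0_iff)
    then show "(cnj (\<psi> a) * \<psi> a) * (\<Sum>z\<in>bitstrings n. chi z ([1..<Suc n] @ fst a)) = 0"
      using sum_chi_odd_count[OF j(1,2)] by simp
  qed
  finally show ?thesis .
qed

text \<open>Combining: for S_f = {0} the top coefficient equals G 0 = 1, a contradiction.\<close>
lemma lower_bound:
  assumes S: "S_f n f = {replicate n False}" and "k < n"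
  shows "\<not> computes_exactly_na n f k"
proof
  assume "computes_exactly_na n f k"
  then obtain d \<psi> E where unit: "sqnorm (basis_idx n k d) \<psi> = 1"
    and povm: "two_outcome_povm (basis_idx n k d) E"
    and exact: "\<forall>x \<in> bitstrings n.
      prob_outcome0 (basis_idx n k d) E (apply_oracle x \<psi>) = (if f x then 0 else 1)"
    unfolding computes_exactly_na_def by blast
  let ?G = "query_spectrum (basis_idx n k d) \<psi>" and ?zero = "replicate n False"
  have zero: "?zero \<in> bitstrings n"
    by (simp add: bitstrings_def)
  have "(\<Sum>z\<in>bitstrings n. chi z [1..<Suc n] * ?G z) =
      chi ?zero [1..<Suc n] * ?G ?zero + (\<Sum>z\<in>bitstrings n - {?zero}. chi z [1..<Suc n] * ?G z)"
    by (rule sum.remove[OF finite_bitstrings zero])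
  also have "(\<Sum>z\<in>bitstrings n - {?zero}. chi z [1..<Suc n] * ?G z) = 0"
    by (rule sum.neutral) (use query_spectrum_vanishes[OF unit povm exact] S in auto)
  also have "chi ?zero [1..<Suc n] = 1"
    by (rule chi_zero) auto
  also have "?G ?zero = 1"
    using unit by (simp add: query_spectrum_zero)
  finally show False
    using top_coefficient_vanishes[OF \<open>k < n\<close>] by simp
qed

section \<open>Projective measurements onto orthonormal families\<close>

definition projector :: "'x set \<Rightarrow> ('x \<Rightarrow> 'i \<Rightarrow> complex) \<Rightarrow> 'i \<Rightarrow> 'i \<Rightarrow> complex" where
  "projector F \<phi> a b = (\<Sum>x\<in>F. \<phi> x a * cnj (\<phi> x b))"

lemma qform_projector:
  "qform I (projector F \<phi>) v = of_real (\<Sum>x\<in>F. (cmod (cinner I (\<phi> x) v))\<^sup>2)"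
proof -
  have "qform I (projector F \<phi>) v =
      (\<Sum>a\<in>I. \<Sum>b\<in>I. \<Sum>x\<in>F. (cnj (v a) * \<phi> x a) * (cnj (\<phi> x b) * v b))"
    unfolding qform_def projector_def sum_distrib_left sum_distrib_right
    by (intro sum.cong refl) (simp add: ac_simps)
  also have "\<dots> = (\<Sum>x\<in>F. (\<Sum>a\<in>I. cnj (v a) * \<phi> x a) * (\<Sum>b\<in>I. cnj (\<phi> x b) * v b))"
    by (subst sum.swap, subst (2) sum.swap) (simp only: sum_product)
  also have "\<dots> = (\<Sum>x\<in>F. cnj (cinner I (\<phi> x) v) * cinner I (\<phi> x) v)"
    by (simp add: cinner_def mult.commute)
  also have "\<dots> = of_real (\<Sum>x\<in>F. (cmod (cinner I (\<phi> x) v))\<^sup>2)"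
    unfolding of_real_sum
    by (rule sum.cong[OF refl]) (simp only: complex_norm_square mult.commute)
  finally show ?thesis .
qed

text \<open>If the frame operator of the whole family B is a coordinate projection
  (i.e. the family is a tight frame of a coordinate subspace), then projecting
  onto any subfamily F is a valid two-outcome measurement (Bessel's inequality).\<close>
lemma projector_povm:
  assumes finI: "finite I" and finB: "finite B" and "F \<subseteq> B"
    and frame: "\<And>a b. a \<in> I \<Longrightarrow> b \<in> I \<Longrightarrow> projector B \<phi> a b = (if a = b \<and> a \<in> A then 1 else 0)"
  shows "two_outcome_povm I (projector F \<phi>)"
  unfolding two_outcome_povm_def
proof (intro conjI ballI allI)
  fix a b show "projector F \<phi> b a = cnj (projector F \<phi> a b)"
    by (simp add: projector_def mult.commute)
next
  fix v
  show "0 \<le> Re (qform I (projector F \<phi>) v)"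
    by (simp add: qform_projector sum_nonneg)
  have "qform I (projector B \<phi>) v = (\<Sum>a\<in>I. \<Sum>b\<in>I. if b = a then (if a \<in> A then cnj (v a) * v a else 0) else 0)"
    unfolding qform_def using frame by (intro sum.cong refl) auto
  also have "\<dots> = (\<Sum>a\<in>I. if a \<in> A then cnj (v a) * v a else 0)"
    using finI by (simp add: sum.delta)
  also have "\<dots> = of_real (\<Sum>a\<in>I. if a \<in> A then (cmod (v a))\<^sup>2 else 0)"
    unfolding of_real_sum
    by (intro sum.cong refl) (simp only: if_distrib[of of_real] of_real_0 complex_norm_square mult.commute)
  finally have bessel: "Re (qform I (projector B \<phi>) v) = (\<Sum>a\<in>I. if a \<in> A then (cmod (v a))\<^sup>2 else 0)"
    by simp
  have "Re (qform I (projector F \<phi>) v) \<le> Re (qform I (projector B \<phi>) v)"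
    unfolding qform_projector using finB \<open>F \<subseteq> B\<close> by (simp add: sum_mono2)
  also have "\<dots> \<le> sqnorm I v"
    unfolding bessel sqnorm_def by (intro sum_mono) auto
  finally show "Re (qform I (projector F \<phi>) v) \<le> sqnorm I v" .
qed

lemma prob_projector:
  assumes finB: "finite B" and "F \<subseteq> B" and "y \<in> B"
    and orthonormal: "\<And>x. x \<in> B \<Longrightarrow> cinner I (\<phi> x) (\<phi> y) = (if x = y then 1 else 0)"
  shows "prob_outcome0 I (projector F \<phi>) (\<phi> y) = (if y \<in> F then 1 else 0)"
proof -
  have "(\<Sum>x\<in>F. (cmod (cinner I (\<phi> x) (\<phi> y)))\<^sup>2) = (\<Sum>x\<in>F. if x = y then 1 else 0)"
    using \<open>F \<subseteq> B\<close> orthonormal by (intro sum.cong refl) auto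
  also have "\<dots> = (if y \<in> F then 1 else 0)"
    using finite_subset[OF \<open>F \<subseteq> B\<close> finB] by (simp add: sum.delta)
  finally show ?thesis
    by (simp add: prob_outcome0_def qform_projector)
qed

section \<open>Upper bound: n queries suffice\<close>

text \<open>The query word of a subset z of positions: query i if z_i = 1, else the
  dummy index 0.  Then chi x (query_word n z) = (-1)^(x . z).\<close>
definition query_word :: "nat \<Rightarrow> bool list \<Rightarrow> nat list" where
  "query_word n z = map (\<lambda>i. if z ! (i - 1) then i else 0) [1..<Suc n]"

lemma length_query_word [simp]: "length (query_word n z) = n"
  by (simp add: query_word_def)

lemma set_query_word: "set (query_word n z) \<subseteq> {0..n}"
  by (auto simp: query_word_def)

lemma inj_on_query_word: "inj_on (query_word n) (bitstrings n)"
proof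
  fix x y assume x: "x \<in> bitstrings n" and y: "y \<in> bitstrings n"
    and eq: "query_word n x = query_word n y"
  show "x = y"
  proof (rule nth_equalityI)
    show "length x = length y" using x y by (simp add: bitstrings_def)
    fix i assume "i < length x"
    then have "i < n" using x by (simp add: bitstrings_def)
    moreover have "query_word n x ! i = query_word n y ! i" using eq by simp
    ultimately show "x ! i = y ! i"
      by (simp add: query_word_def del: upt_Suc split: if_splits)
  qed
qed

lemma length_filter_query_word:
  "length (filter P (query_word n z)) = card ({i. P (if z ! (i - 1) then i else 0)} \<inter> {1..n})"
  unfolding query_word_def filter_map length_map distinct_length_filter[OF distinct_upt]
    set_upt atLeastLessThanSuc_atLeastAtMost o_def ..

lemma count_list_query_word:
  assumes "1 \<le> j" "j \<le> n"
  shows "count_list (query_word n z) j = (if z ! (j - 1) then 1 else 0)"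
proof -
  have "{i. j = (if z ! (i - 1) then i else 0)} \<inter> {1..n} = (if z ! (j - 1) then {j} else {})"
    using assms by auto
  then show ?thesis
    unfolding count_list_eq_length_filter length_filter_query_word by simp
qed

lemma chi_query_word_swap: "chi x (query_word n z) = chi z (query_word n x)"
proof -
  have "{i. qbit x (if z ! (i - 1) then i else 0)} \<inter> {1..n} =
      {i. qbit z (if x ! (i - 1) then i else 0)} \<inter> {1..n}"
    by (auto simp: qbit_def)
  then show ?thesis
    unfolding chi_def length_filter_query_word by simp
qed

lemma sum_chi_query_words:
  assumes z1: "z1 \<in> bitstrings n" and z2: "z2 \<in> bitstrings n"
  shows "(\<Sum>x\<in>bitstrings n. chi x (query_word n z1 @ query_word n z2)) =
    (if z1 = z2 then 2 ^ n else 0)"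
proof (cases "z1 = z2")
  case True
  then show ?thesis by (simp add: chi_append card_bitstrings)
next
  case False
  obtain i where i: "i < n" "z1 ! i \<noteq> z2 ! i"
    using False z1 z2 nth_equalityI[of z1 z2] by (auto simp: bitstrings_def)
  then have "odd (count_list (query_word n z1 @ query_word n z2) (Suc i))"
    by (simp add: count_list_query_word)
  then show ?thesis
    using False sum_chi_odd_count[of "Suc i" n] i by simp
qed

text \<open>The uniform superposition of all query words (with workspace index 0).
  Its oracle images are the n-qubit Hadamard basis states.\<close>
definition hadamard_support :: "nat \<Rightarrow> (nat list \<times> nat) set" where
  "hadamard_support n = (\<lambda>z. (query_word n z, 0)) ` bitstrings n"

definition hadamard_amplitude :: "nat \<Rightarrow> complex" where
  "hadamard_amplitude n = of_real (1 / sqrt (2 ^ n))"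

definition hadamard_state :: "nat \<Rightarrow> nat list \<times> nat \<Rightarrow> complex" where
  "hadamard_state n a = (if a \<in> hadamard_support n then hadamard_amplitude n else 0)"

lemma cnj_hadamard_amplitude [simp]: "cnj (hadamard_amplitude n) = hadamard_amplitude n"
  by (simp add: hadamard_amplitude_def)

lemma hadamard_amplitude_square: "(hadamard_amplitude n)\<^sup>2 * 2 ^ n = 1"
proof -
  have "(1 / sqrt (2 ^ n :: real))\<^sup>2 * 2 ^ n = 1"
    by (simp add: power_divide)
  then show ?thesis
    unfolding hadamard_amplitude_def
    by (metis of_real_1 of_real_mult of_real_numeral of_real_power)
qed

lemma hadamard_support_basis: "hadamard_support n \<subseteq> basis_idx n n 1"
  unfolding hadamard_support_def basis_idx_def using set_query_word by auto

lemma sum_hadamard_support: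
  "(\<Sum>a\<in>basis_idx n n 1. if a \<in> hadamard_support n then h a else 0) =
    (\<Sum>z\<in>bitstrings n. h (query_word n z, 0))"
proof -
  have "(\<Sum>a\<in>basis_idx n n 1. if a \<in> hadamard_support n then h a else 0) = sum h (hadamard_support n)"
    using hadamard_support_basis
    by (simp add: sum.inter_restrict[symmetric] Int_absorb1)
  also have "\<dots> = (\<Sum>z\<in>bitstrings n. h (query_word n z, 0))"
    unfolding hadamard_support_def
    using inj_on_query_word by (subst sum.reindex) (auto simp: inj_on_def)
  finally show ?thesis .
qed

lemma oracle_hadamard_state:
  "apply_oracle x (hadamard_state n) a =
    (if a \<in> hadamard_support n then chi x (fst a) * hadamard_amplitude n else 0)"
  by (simp add: apply_oracle_chi hadamard_state_def)

lemma hadamard_state_unit: "sqnorm (basis_idx n n 1) (hadamard_state n) = 1"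
proof -
  have "of_real (sqnorm (basis_idx n n 1) (hadamard_state n)) =
      (\<Sum>a\<in>basis_idx n n 1. if a \<in> hadamard_support n then (hadamard_amplitude n)\<^sup>2 else 0)"
    unfolding cinner_self[symmetric] cinner_def
    by (intro sum.cong refl) (simp add: hadamard_state_def power2_eq_square)
  also have "\<dots> = (\<Sum>z\<in>bitstrings n. (hadamard_amplitude n)\<^sup>2)"
    by (rule sum_hadamard_support)
  also have "\<dots> = 1"
    using hadamard_amplitude_square[of n] by (simp add: card_bitstrings mult.commute)
  finally show ?thesis by simp
qed

lemma hadamard_orthonormal:
  assumes "x \<in> bitstrings n" "y \<in> bitstrings n"
  shows "cinner (basis_idx n n 1) (apply_oracle x (hadamard_state n)) (apply_oracle y (hadamard_state n)) =
    (if x = y then 1 else 0)"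
proof -
  let ?r = "hadamard_amplitude n"
  have "cinner (basis_idx n n 1) (apply_oracle x (hadamard_state n)) (apply_oracle y (hadamard_state n)) =
      (\<Sum>a\<in>basis_idx n n 1. if a \<in> hadamard_support n
         then ?r\<^sup>2 * (chi x (fst a) * chi y (fst a)) else 0)"
    unfolding cinner_def oracle_hadamard_state
    by (intro sum.cong refl) (simp add: power2_eq_square)
  also have "\<dots> = (\<Sum>z\<in>bitstrings n. ?r\<^sup>2 * (chi x (query_word n z) * chi y (query_word n z)))"
    by (subst sum_hadamard_support) simp
  also have "\<dots> = ?r\<^sup>2 * (\<Sum>z\<in>bitstrings n. chi z (query_word n x @ query_word n y))"
    by (simp add: sum_distrib_left chi_append chi_query_word_swap[of _ n z for z])
  also have "\<dots> = (if x = y then 1 else 0)"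
    using sum_chi_query_words[OF assms] hadamard_amplitude_square by simp
  finally show ?thesis .
qed

lemma hadamard_frame:
  assumes "a \<in> basis_idx n n 1" "b \<in> basis_idx n n 1"
  shows "projector (bitstrings n) (\<lambda>x. apply_oracle x (hadamard_state n)) a b =
    (if a = b \<and> a \<in> hadamard_support n then 1 else 0)"
proof (cases "a \<in> hadamard_support n \<and> b \<in> hadamard_support n")
  case False
  then show ?thesis
    by (auto simp: projector_def oracle_hadamard_state)
next
  case True
  then obtain z1 z2 where z: "z1 \<in> bitstrings n" "z2 \<in> bitstrings n"
    and a: "a = (query_word n z1, 0)" and b: "b = (query_word n z2, 0)"
    unfolding hadamard_support_def by blast
  have "projector (bitstrings n) (\<lambda>x. apply_oracle x (hadamard_state n)) a b =
      (hadamard_amplitude n)\<^sup>2 *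
      (\<Sum>x\<in>bitstrings n. chi x (query_word n z1 @ query_word n z2))"
    using True a b
    by (simp add: projector_def oracle_hadamard_state sum_distrib_left chi_append
        power2_eq_square ac_simps)
  also have "\<dots> = (if z1 = z2 then 1 else 0)"
    using sum_chi_query_words[OF z] hadamard_amplitude_square by simp
  also have "(z1 = z2) = (a = b)"
    using a b z inj_on_query_word by (auto dest: inj_onD)
  finally show ?thesis
    using True by simp
qed

lemma upper_bound: "computes_exactly_na n f n"
proof -
  let ?I = "basis_idx n n 1" and ?\<phi> = "\<lambda>x. apply_oracle x (hadamard_state n)"
    and ?F = "{x \<in> bitstrings n. \<not> f x}"
  have povm: "two_outcome_povm ?I (projector ?F ?\<phi>)"
    by (rule projector_povm[OF finite_basis_idx finite_bitstrings _ hadamard_frame]) auto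
  have "prob_outcome0 ?I (projector ?F ?\<phi>) (?\<phi> y) = (if f y then 0 else 1)"
    if "y \<in> bitstrings n" for y
    using prob_projector[OF finite_bitstrings _ that hadamard_orthonormal[OF _ that]] that
    by auto
  then show ?thesis
    unfolding computes_exactly_na_def
    using hadamard_state_unit povm by blast
qed

theorem corollary7p3:
  fixes n :: nat and f :: "bool list \<Rightarrow> bool"
  assumes "S_f n f = {replicate n False}"
  shows "QE_na n f = n"
  unfolding QE_na_def
proof (rule Least_equality)
  show "computes_exactly_na n f n"
    by (rule upper_bound)
next
  fix k assume "computes_exactly_na n f k"
  then show "n \<le> k"
    using lower_bound[OF assms] by (meson not_le)
qed

end
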